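(* Let $F\colon\mathcal{B}\to\mathcal{C}$ be a lax functor of bicategories and $u\colon X\to Y$ a 1-cell in $\mathcal{C}$. Then the assignment $F\downarrow u\colon F\downarrow X\to F\downarrow Y$ given on objects by $(A,f_A)\mapsto(A,uf_A)$, on 1-cells by $(p,\theta)\mapsto(p,a^{-1}\circ(1_u*\theta))$ (with $a$ the associator of $\mathcal{C}$), and on 2-cells by $\alpha\mapsto\alpha$, is a strict functor of bicategories.
   Context: A strict functor is a lax functor whose lax constraints are identities. Lax slice $F\downarrow X$: objects $(A,f_A)$ with $A\in\mathcal{B}$, $f_A\colon FA\to X$ in $\mathcal{C}$; 1-cells $(p,\theta)\colon(A_0,f_0)\to(A_1,f_1)$ with $p\colon A_0\to A_1$ in $\mathcal{B}$ and $\theta\colon f_0\Rightarrow f_1\circ Fp$; 2-cells $\alpha\colon p_0\Rightarrow p_1$ in $\mathcal{B}$ with $(1_{f_1}*F\alpha)\circ\theta_0=\theta_1$. Identity 1-cell of $(A,f_A)$: $(1_A,(1_{f_A}*F^0_A)\circ r^{-1}_{f_A})$ where $F^0_A\colon 1_{FA}\Rightarrow F1_A$; composite of $(p_0,\theta_0)$ and $(p_1,\theta_1)$ is $(p_1p_0,(1_{f_2}*F^2_{p_1,p_0})\circ a\circ(\theta_1*1_{Fp_0})\circ\theta_0)$ with $F^2_{g,f}\colon Fg\circ Ff\Rightarrow F(gf)$; 2-cell compositions, associator and unitors come from $\mathcal{B}$. *)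

theory Defs
  imports Main
begin

text \<open>A bicategory is presented by a set of objects, a set of 1-cells with source and
target, a set of 2-cells with domain and codomain 1-cells, identity 1-cells,
horizontal composition of 1-cells (written g f for g after f), identity 2-cells,
vertical composition (beta after alpha), horizontal composition of 2-cells,
associator a(h,g,f) : (h g) f => h (g f), left unitor l(f) : 1 f => f and
right unitor r(f) : f 1 => f.  Operations are total functions; only their values
on well-typed arguments matter.\<close>

record ('o, 'a, 'c) bicat =
  bob     :: "'o set"
  bhom    :: "'a set"
  bsrc    :: "'a \<Rightarrow> 'o"
  btrg    :: "'a \<Rightarrow> 'o"
  bcell   :: "'c set"
  bdom    :: "'c \<Rightarrow> 'a"
  bcod    :: "'c \<Rightarrow> 'a"
  bid1    :: "'o \<Rightarrow> 'a"
  bcomp1  :: "'a \<Rightarrow> 'a \<Rightarrow> 'a"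
  bid2    :: "'a \<Rightarrow> 'c"
  bvcomp  :: "'c \<Rightarrow> 'c \<Rightarrow> 'c"
  bhcomp  :: "'c \<Rightarrow> 'c \<Rightarrow> 'c"
  bassoc  :: "'a \<Rightarrow> 'a \<Rightarrow> 'a \<Rightarrow> 'c"
  blunit  :: "'a \<Rightarrow> 'c"
  brunit  :: "'a \<Rightarrow> 'c"

definition composable :: "('o, 'a, 'c, 'x) bicat_scheme \<Rightarrow> 'a \<Rightarrow> 'a \<Rightarrow> bool" where
  "composable B g f \<longleftrightarrow> f \<in> bhom B \<and> g \<in> bhom B \<and> bsrc B g = btrg B f"

definition cell_in :: "('o, 'a, 'c, 'x) bicat_scheme \<Rightarrow> 'c \<Rightarrow> 'a \<Rightarrow> 'a \<Rightarrow> bool" where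
  "cell_in B \<alpha> f g \<longleftrightarrow> \<alpha> \<in> bcell B \<and> bdom B \<alpha> = f \<and> bcod B \<alpha> = g"

definition is_inverse2 :: "('o, 'a, 'c, 'x) bicat_scheme \<Rightarrow> 'c \<Rightarrow> 'c \<Rightarrow> bool" where
  "is_inverse2 B \<alpha> \<beta> \<longleftrightarrow> \<alpha> \<in> bcell B \<and> \<beta> \<in> bcell B \<and>
     bdom B \<beta> = bcod B \<alpha> \<and> bcod B \<beta> = bdom B \<alpha> \<and>
     bvcomp B \<beta> \<alpha> = bid2 B (bdom B \<alpha>) \<and> bvcomp B \<alpha> \<beta> = bid2 B (bcod B \<alpha>)"

definition iso2 :: "('o, 'a, 'c, 'x) bicat_scheme \<Rightarrow> 'c \<Rightarrow> bool" where
  "iso2 B \<alpha> \<longleftrightarrow> (\<exists>\<beta>. is_inverse2 B \<alpha> \<beta>)"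

definition inv2 :: "('o, 'a, 'c, 'x) bicat_scheme \<Rightarrow> 'c \<Rightarrow> 'c" where
  "inv2 B \<alpha> = (THE \<beta>. is_inverse2 B \<alpha> \<beta>)"

definition bicategory :: "('o, 'a, 'c, 'x) bicat_scheme \<Rightarrow> bool" where
  "bicategory B \<longleftrightarrow>
    (\<forall>X\<in>bob B. bid1 B X \<in> bhom B \<and> bsrc B (bid1 B X) = X \<and> btrg B (bid1 B X) = X) \<and>
    (\<forall>f\<in>bhom B. bsrc B f \<in> bob B \<and> btrg B f \<in> bob B) \<and>
    (\<forall>g f. composable B g f \<longrightarrow> bcomp1 B g f \<in> bhom B \<and>
        bsrc B (bcomp1 B g f) = bsrc B f \<and> btrg B (bcomp1 B g f) = btrg B g) \<and>
    (\<forall>\<alpha>\<in>bcell B. bdom B \<alpha> \<in> bhom B \<and> bcod B \<alpha> \<in> bhom B \<and>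
        bsrc B (bdom B \<alpha>) = bsrc B (bcod B \<alpha>) \<and> btrg B (bdom B \<alpha>) = btrg B (bcod B \<alpha>)) \<and>
    (\<forall>f\<in>bhom B. cell_in B (bid2 B f) f f) \<and>
    (\<forall>\<alpha> \<beta>. \<alpha> \<in> bcell B \<and> \<beta> \<in> bcell B \<and> bcod B \<alpha> = bdom B \<beta> \<longrightarrow>
        cell_in B (bvcomp B \<beta> \<alpha>) (bdom B \<alpha>) (bcod B \<beta>)) \<and>
    (\<forall>\<alpha>\<in>bcell B. bvcomp B (bid2 B (bcod B \<alpha>)) \<alpha> = \<alpha> \<and> bvcomp B \<alpha> (bid2 B (bdom B \<alpha>)) = \<alpha>) \<and>
    (\<forall>\<alpha> \<beta> \<gamma>. \<alpha> \<in> bcell B \<and> \<beta> \<in> bcell B \<and> \<gamma> \<in> bcell B \<and>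
        bcod B \<alpha> = bdom B \<beta> \<and> bcod B \<beta> = bdom B \<gamma> \<longrightarrow>
        bvcomp B \<gamma> (bvcomp B \<beta> \<alpha>) = bvcomp B (bvcomp B \<gamma> \<beta>) \<alpha>) \<and>
    (\<forall>\<alpha> \<beta>. \<alpha> \<in> bcell B \<and> \<beta> \<in> bcell B \<and> bsrc B (bdom B \<beta>) = btrg B (bdom B \<alpha>) \<longrightarrow>
        cell_in B (bhcomp B \<beta> \<alpha>) (bcomp1 B (bdom B \<beta>) (bdom B \<alpha>))
                                 (bcomp1 B (bcod B \<beta>) (bcod B \<alpha>))) \<and>
    (\<forall>g f. composable B g f \<longrightarrow> bhcomp B (bid2 B g) (bid2 B f) = bid2 B (bcomp1 B g f)) \<and>
    (\<forall>\<alpha> \<alpha>' \<beta> \<beta>'. \<alpha> \<in> bcell B \<and> \<alpha>' \<in> bcell B \<and> \<beta> \<in> bcell B \<and> \<beta>' \<in> bcell B \<and>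
        bcod B \<alpha> = bdom B \<alpha>' \<and> bcod B \<beta> = bdom B \<beta>' \<and>
        bsrc B (bdom B \<beta>) = btrg B (bdom B \<alpha>) \<longrightarrow>
        bhcomp B (bvcomp B \<beta>' \<beta>) (bvcomp B \<alpha>' \<alpha>) = bvcomp B (bhcomp B \<beta>' \<alpha>') (bhcomp B \<beta> \<alpha>)) \<and>
    (\<forall>h g f. composable B h g \<and> composable B g f \<longrightarrow>
        cell_in B (bassoc B h g f) (bcomp1 B (bcomp1 B h g) f) (bcomp1 B h (bcomp1 B g f)) \<and>
        iso2 B (bassoc B h g f)) \<and>
    (\<forall>f\<in>bhom B.
        cell_in B (blunit B f) (bcomp1 B (bid1 B (btrg B f)) f) f \<and> iso2 B (blunit B f) \<and>
        cell_in B (brunit B f) (bcomp1 B f (bid1 B (bsrc B f))) f \<and> iso2 B (brunit B f)) \<and>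
    (\<forall>\<alpha> \<beta> \<gamma>. \<alpha> \<in> bcell B \<and> \<beta> \<in> bcell B \<and> \<gamma> \<in> bcell B \<and>
        bsrc B (bdom B \<gamma>) = btrg B (bdom B \<beta>) \<and> bsrc B (bdom B \<beta>) = btrg B (bdom B \<alpha>) \<longrightarrow>
        bvcomp B (bassoc B (bcod B \<gamma>) (bcod B \<beta>) (bcod B \<alpha>)) (bhcomp B (bhcomp B \<gamma> \<beta>) \<alpha>) =
        bvcomp B (bhcomp B \<gamma> (bhcomp B \<beta> \<alpha>)) (bassoc B (bdom B \<gamma>) (bdom B \<beta>) (bdom B \<alpha>))) \<and>
    (\<forall>\<alpha>\<in>bcell B.
        bvcomp B (blunit B (bcod B \<alpha>)) (bhcomp B (bid2 B (bid1 B (btrg B (bdom B \<alpha>)))) \<alpha>) =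
        bvcomp B \<alpha> (blunit B (bdom B \<alpha>)) \<and>
        bvcomp B (brunit B (bcod B \<alpha>)) (bhcomp B \<alpha> (bid2 B (bid1 B (bsrc B (bdom B \<alpha>))))) =
        bvcomp B \<alpha> (brunit B (bdom B \<alpha>))) \<and>
    (\<forall>k h g f. composable B k h \<and> composable B h g \<and> composable B g f \<longrightarrow>
        bvcomp B (bhcomp B (bid2 B k) (bassoc B h g f))
          (bvcomp B (bassoc B k (bcomp1 B h g) f) (bhcomp B (bassoc B k h g) (bid2 B f))) =
        bvcomp B (bassoc B k h (bcomp1 B g f)) (bassoc B (bcomp1 B k h) g f)) \<and>
    (\<forall>g f. composable B g f \<longrightarrow>
        bvcomp B (bhcomp B (bid2 B g) (blunit B f)) (bassoc B g (bid1 B (bsrc B g)) f) =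
        bhcomp B (brunit B g) (bid2 B f))"

text \<open>A lax functor consists of maps on objects, 1-cells and 2-cells together with
lax constraints fcomp g f = F2(g,f) : Fg Ff => F(gf) and funit A = F0(A) : 1_(FA) => F(1_A).\<close>

record ('o, 'a, 'c, 'o2, 'a2, 'c2) laxf =
  fobj  :: "'o \<Rightarrow> 'o2"
  fmor  :: "'a \<Rightarrow> 'a2"
  fcell :: "'c \<Rightarrow> 'c2"
  fcomp :: "'a \<Rightarrow> 'a \<Rightarrow> 'c2"
  funit :: "'o \<Rightarrow> 'c2"

definition lax_functor ::
  "('o, 'a, 'c, 'x) bicat_scheme \<Rightarrow> ('o2, 'a2, 'c2, 'y) bicat_scheme \<Rightarrow>
   ('o, 'a, 'c, 'o2, 'a2, 'c2, 'z) laxf_scheme \<Rightarrow> bool" where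
  "lax_functor B C F \<longleftrightarrow>
    (\<forall>A\<in>bob B. fobj F A \<in> bob C) \<and>
    (\<forall>f\<in>bhom B. fmor F f \<in> bhom C \<and> bsrc C (fmor F f) = fobj F (bsrc B f) \<and>
        btrg C (fmor F f) = fobj F (btrg B f)) \<and>
    (\<forall>\<alpha>\<in>bcell B. cell_in C (fcell F \<alpha>) (fmor F (bdom B \<alpha>)) (fmor F (bcod B \<alpha>))) \<and>
    (\<forall>f\<in>bhom B. fcell F (bid2 B f) = bid2 C (fmor F f)) \<and>
    (\<forall>\<alpha> \<beta>. \<alpha> \<in> bcell B \<and> \<beta> \<in> bcell B \<and> bcod B \<alpha> = bdom B \<beta> \<longrightarrow>
        fcell F (bvcomp B \<beta> \<alpha>) = bvcomp C (fcell F \<beta>) (fcell F \<alpha>)) \<and>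
    (\<forall>A\<in>bob B. cell_in C (funit F A) (bid1 C (fobj F A)) (fmor F (bid1 B A))) \<and>
    (\<forall>g f. composable B g f \<longrightarrow>
        cell_in C (fcomp F g f) (bcomp1 C (fmor F g) (fmor F f)) (fmor F (bcomp1 B g f))) \<and>
    (\<forall>\<alpha> \<beta>. \<alpha> \<in> bcell B \<and> \<beta> \<in> bcell B \<and> bsrc B (bdom B \<beta>) = btrg B (bdom B \<alpha>) \<longrightarrow>
        bvcomp C (fcell F (bhcomp B \<beta> \<alpha>)) (fcomp F (bdom B \<beta>) (bdom B \<alpha>)) =
        bvcomp C (fcomp F (bcod B \<beta>) (bcod B \<alpha>)) (bhcomp C (fcell F \<beta>) (fcell F \<alpha>))) \<and>
    (\<forall>h g f. composable B h g \<and> composable B g f \<longrightarrow>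
        bvcomp C (fcell F (bassoc B h g f))
          (bvcomp C (fcomp F (bcomp1 B h g) f) (bhcomp C (fcomp F h g) (bid2 C (fmor F f)))) =
        bvcomp C (fcomp F h (bcomp1 B g f))
          (bvcomp C (bhcomp C (bid2 C (fmor F h)) (fcomp F g f))
             (bassoc C (fmor F h) (fmor F g) (fmor F f)))) \<and>
    (\<forall>f\<in>bhom B.
        blunit C (fmor F f) =
          bvcomp C (fcell F (blunit B f))
            (bvcomp C (fcomp F (bid1 B (btrg B f)) f) (bhcomp C (funit F (btrg B f)) (bid2 C (fmor F f)))) \<and>
        brunit C (fmor F f) =
          bvcomp C (fcell F (brunit B f))
            (bvcomp C (fcomp F f (bid1 B (bsrc B f))) (bhcomp C (bid2 C (fmor F f)) (funit F (bsrc B f)))))"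

definition strict_functor ::
  "('o, 'a, 'c, 'x) bicat_scheme \<Rightarrow> ('o2, 'a2, 'c2, 'y) bicat_scheme \<Rightarrow>
   ('o, 'a, 'c, 'o2, 'a2, 'c2, 'z) laxf_scheme \<Rightarrow> bool" where
  "strict_functor B C F \<longleftrightarrow> lax_functor B C F \<and>
    (\<forall>g f. composable B g f \<longrightarrow> fcomp F g f = bid2 C (bcomp1 C (fmor F g) (fmor F f))) \<and>
    (\<forall>A\<in>bob B. funit F A = bid2 C (bid1 C (fobj F A)))"

text \<open>A 1-cell (p,theta) : (A0,f0) -> (A1,f1) is
recorded together with its source and target object as ((A0,f0),(A1,f1),p,theta).
A 2-cell alpha : (p0,theta0) => (p1,theta1) is recorded with its source and target
1-cells as (P0, P1, alpha).\<close>

type_synonym ('o, 'a2) sl_obj = "'o \<times> 'a2"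
type_synonym ('o, 'a, 'a2, 'c2) sl_mor = "('o \<times> 'a2) \<times> ('o \<times> 'a2) \<times> 'a \<times> 'c2"
type_synonym ('o, 'a, 'c, 'a2, 'c2) sl_cell =
  "(('o \<times> 'a2) \<times> ('o \<times> 'a2) \<times> 'a \<times> 'c2) \<times> (('o \<times> 'a2) \<times> ('o \<times> 'a2) \<times> 'a \<times> 'c2) \<times> 'c"

definition sl_src :: "('o, 'a, 'a2, 'c2) sl_mor \<Rightarrow> ('o, 'a2) sl_obj" where
  "sl_src P = fst P"
definition sl_trg :: "('o, 'a, 'a2, 'c2) sl_mor \<Rightarrow> ('o, 'a2) sl_obj" where
  "sl_trg P = fst (snd P)"
definition sl_p :: "('o, 'a, 'a2, 'c2) sl_mor \<Rightarrow> 'a" where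
  "sl_p P = fst (snd (snd P))"
definition sl_theta :: "('o, 'a, 'a2, 'c2) sl_mor \<Rightarrow> 'c2" where
  "sl_theta P = snd (snd (snd P))"

definition sl_obs ::
  "('o, 'a, 'c, 'x) bicat_scheme \<Rightarrow> ('o2, 'a2, 'c2, 'y) bicat_scheme \<Rightarrow>
   ('o, 'a, 'c, 'o2, 'a2, 'c2, 'z) laxf_scheme \<Rightarrow> 'o2 \<Rightarrow> ('o, 'a2) sl_obj set" where
  "sl_obs B C F X = {(A, f). A \<in> bob B \<and> f \<in> bhom C \<and> bsrc C f = fobj F A \<and> btrg C f = X}"

definition sl_homs ::
  "('o, 'a, 'c, 'x) bicat_scheme \<Rightarrow> ('o2, 'a2, 'c2, 'y) bicat_scheme \<Rightarrow>
   ('o, 'a, 'c, 'o2, 'a2, 'c2, 'z) laxf_scheme \<Rightarrow> 'o2 \<Rightarrow> ('o, 'a, 'a2, 'c2) sl_mor set" where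
  "sl_homs B C F X = {((A0, f0), (A1, f1), p, \<theta>).
      (A0, f0) \<in> sl_obs B C F X \<and> (A1, f1) \<in> sl_obs B C F X \<and>
      p \<in> bhom B \<and> bsrc B p = A0 \<and> btrg B p = A1 \<and>
      cell_in C \<theta> f0 (bcomp1 C f1 (fmor F p))}"

definition sl_cells ::
  "('o, 'a, 'c, 'x) bicat_scheme \<Rightarrow> ('o2, 'a2, 'c2, 'y) bicat_scheme \<Rightarrow>
   ('o, 'a, 'c, 'o2, 'a2, 'c2, 'z) laxf_scheme \<Rightarrow> 'o2 \<Rightarrow> ('o, 'a, 'c, 'a2, 'c2) sl_cell set" where
  "sl_cells B C F X = {(P0, P1, \<alpha>).
      P0 \<in> sl_homs B C F X \<and> P1 \<in> sl_homs B C F X \<and>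
      sl_src P0 = sl_src P1 \<and> sl_trg P0 = sl_trg P1 \<and>
      cell_in B \<alpha> (sl_p P0) (sl_p P1) \<and>
      bvcomp C (bhcomp C (bid2 C (snd (sl_trg P1))) (fcell F \<alpha>)) (sl_theta P0) = sl_theta P1}"

definition sl_id1 ::
  "('o2, 'a2, 'c2, 'y) bicat_scheme \<Rightarrow> ('o, 'a, 'c, 'x) bicat_scheme \<Rightarrow>
   ('o, 'a, 'c, 'o2, 'a2, 'c2, 'z) laxf_scheme \<Rightarrow> ('o, 'a2) sl_obj \<Rightarrow> ('o, 'a, 'a2, 'c2) sl_mor" where
  "sl_id1 C B F Af = (case Af of (A, f) \<Rightarrow> ((A, f), (A, f), bid1 B A,
      bvcomp C (bhcomp C (bid2 C f) (funit F A)) (inv2 C (brunit C f))))"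

definition sl_comp1 ::
  "('o, 'a, 'c, 'x) bicat_scheme \<Rightarrow> ('o2, 'a2, 'c2, 'y) bicat_scheme \<Rightarrow>
   ('o, 'a, 'c, 'o2, 'a2, 'c2, 'z) laxf_scheme \<Rightarrow>
   ('o, 'a, 'a2, 'c2) sl_mor \<Rightarrow> ('o, 'a, 'a2, 'c2) sl_mor \<Rightarrow> ('o, 'a, 'a2, 'c2) sl_mor" where
  "sl_comp1 B C F P1 P0 = (sl_src P0, sl_trg P1, bcomp1 B (sl_p P1) (sl_p P0),
      bvcomp C (bhcomp C (bid2 C (snd (sl_trg P1))) (fcomp F (sl_p P1) (sl_p P0)))
       (bvcomp C (bassoc C (snd (sl_trg P1)) (fmor F (sl_p P1)) (fmor F (sl_p P0)))
         (bvcomp C (bhcomp C (sl_theta P1) (bid2 C (fmor F (sl_p P0)))) (sl_theta P0))))"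

definition lax_slice ::
  "('o, 'a, 'c, 'x) bicat_scheme \<Rightarrow> ('o2, 'a2, 'c2, 'y) bicat_scheme \<Rightarrow>
   ('o, 'a, 'c, 'o2, 'a2, 'c2, 'z) laxf_scheme \<Rightarrow> 'o2 \<Rightarrow>
   (('o, 'a2) sl_obj, ('o, 'a, 'a2, 'c2) sl_mor, ('o, 'a, 'c, 'a2, 'c2) sl_cell) bicat" where
  "lax_slice B C F X =
    \<lparr> bob = sl_obs B C F X,
      bhom = sl_homs B C F X,
      bsrc = sl_src,
      btrg = sl_trg,
      bcell = sl_cells B C F X,
      bdom = (\<lambda>(P0, P1, \<alpha>). P0),
      bcod = (\<lambda>(P0, P1, \<alpha>). P1),
      bid1 = sl_id1 C B F,
      bcomp1 = sl_comp1 B C F,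
      bid2 = (\<lambda>P. (P, P, bid2 B (sl_p P))),
      bvcomp = (\<lambda>(Q0, Q1, \<beta>) (P0, P1, \<alpha>). (P0, Q1, bvcomp B \<beta> \<alpha>)),
      bhcomp = (\<lambda>(Q0, Q1, \<beta>) (P0, P1, \<alpha>).
                 (sl_comp1 B C F Q0 P0, sl_comp1 B C F Q1 P1, bhcomp B \<beta> \<alpha>)),
      bassoc = (\<lambda>H G P. (sl_comp1 B C F (sl_comp1 B C F H G) P, sl_comp1 B C F H (sl_comp1 B C F G P),
                 bassoc B (sl_p H) (sl_p G) (sl_p P))),
      blunit = (\<lambda>P. (sl_comp1 B C F (sl_id1 C B F (sl_trg P)) P, P, blunit B (sl_p P))),
      brunit = (\<lambda>P. (sl_comp1 B C F P (sl_id1 C B F (sl_src P)), P, brunit B (sl_p P))) \<rparr>"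

definition sl_map_obj :: "('o2, 'a2, 'c2, 'y) bicat_scheme \<Rightarrow> 'a2 \<Rightarrow> ('o, 'a2) sl_obj \<Rightarrow> ('o, 'a2) sl_obj" where
  "sl_map_obj C u Af = (case Af of (A, f) \<Rightarrow> (A, bcomp1 C u f))"

definition sl_map_mor ::
  "('o2, 'a2, 'c2, 'y) bicat_scheme \<Rightarrow> ('o, 'a, 'c, 'o2, 'a2, 'c2, 'z) laxf_scheme \<Rightarrow> 'a2 \<Rightarrow>
   ('o, 'a, 'a2, 'c2) sl_mor \<Rightarrow> ('o, 'a, 'a2, 'c2) sl_mor" where
  "sl_map_mor C F u P = (sl_map_obj C u (sl_src P), sl_map_obj C u (sl_trg P), sl_p P,
      bvcomp C (inv2 C (bassoc C u (snd (sl_trg P)) (fmor F (sl_p P))))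
               (bhcomp C (bid2 C u) (sl_theta P)))"

definition slice_functor ::
  "('o, 'a, 'c, 'x) bicat_scheme \<Rightarrow> ('o2, 'a2, 'c2, 'y) bicat_scheme \<Rightarrow>
   ('o, 'a, 'c, 'o2, 'a2, 'c2, 'z) laxf_scheme \<Rightarrow> 'o2 \<Rightarrow> 'a2 \<Rightarrow>
   (('o, 'a2) sl_obj, ('o, 'a, 'a2, 'c2) sl_mor, ('o, 'a, 'c, 'a2, 'c2) sl_cell,
    ('o, 'a2) sl_obj, ('o, 'a, 'a2, 'c2) sl_mor, ('o, 'a, 'c, 'a2, 'c2) sl_cell) laxf" where
  "slice_functor B C F Y u =
    \<lparr> fobj = sl_map_obj C u,
      fmor = sl_map_mor C F u,
      fcell = (\<lambda>(P0, P1, \<alpha>). (sl_map_mor C F u P0, sl_map_mor C F u P1, \<alpha>)),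
      fcomp = (\<lambda>G P. bid2 (lax_slice B C F Y)
                 (bcomp1 (lax_slice B C F Y) (sl_map_mor C F u G) (sl_map_mor C F u P))),
      funit = (\<lambda>Af. bid2 (lax_slice B C F Y) (bid1 (lax_slice B C F Y) (sl_map_obj C u Af))) \<rparr>"

end

theory Submission
  imports Defs
begin

text \<open>The functor \<open>F\<down>u\<close> is the identity on the \<open>\<B>\<close>-components of 1-cells and on
  2-cells, and 2-cells of a lax slice are 2-cells of \<open>\<B>\<close>. So once \<open>F\<down>u\<close> is known to
  preserve identity 1-cells and composites on the nose, every axiom of a lax functor with
  identity constraints reduces to a unit law of \<open>\<B>\<close>. On \<open>\<C>\<close>-components \<open>F\<down>u\<close> is the
  postcomposition \<open>\<theta> \<mapsto> a\<^sup>-\<^sup>1 \<cdot> (1\<^sub>u \<star> \<theta>)\<close>, and the two facts are coherence identities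
  for it: postcomposition is natural, which absorbs the constraint cells \<open>F\<^sup>0\<close> and \<open>F\<^sup>2\<close>;
  it sends \<open>r\<^sup>-\<^sup>1\<^sub>f\<close> to \<open>r\<^sup>-\<^sup>1\<^sub>u\<^sub>f\<close> (Kelly's lemma); and it is compatible with pasting
  (the pentagon).\<close>

section \<open>Coherence in a bicategory\<close>

locale bicat =
  fixes C :: "('o, 'a, 'c, 'x) bicat_scheme"
  assumes bicategory: "bicategory C"
begin

abbreviation vcomp (infixr \<open>\<cdot>\<close> 55) where "\<beta> \<cdot> \<alpha> \<equiv> bvcomp C \<beta> \<alpha>"
abbreviation hcomp (infixr \<open>\<star>\<close> 60) where "\<beta> \<star> \<alpha> \<equiv> bhcomp C \<beta> \<alpha>"
abbreviation comp1 (infixr \<open>\<odot>\<close> 60) where "g \<odot> f \<equiv> bcomp1 C g f"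
abbreviation id2 (\<open>\<one>[_]\<close>) where "\<one>[f] \<equiv> bid2 C f"
abbreviation assoc (\<open>\<a>[_, _, _]\<close>) where "\<a>[h, g, f] \<equiv> bassoc C h g f"
abbreviation assoc_inv (\<open>\<a>\<^sup>-\<^sup>1[_, _, _]\<close>) where "\<a>\<^sup>-\<^sup>1[h, g, f] \<equiv> inv2 C (bassoc C h g f)"
abbreviation lunit (\<open>\<l>[_]\<close>) where "\<l>[f] \<equiv> blunit C f"
abbreviation runit (\<open>\<r>[_]\<close>) where "\<r>[f] \<equiv> brunit C f"
abbreviation runit_inv (\<open>\<r>\<^sup>-\<^sup>1[_]\<close>) where "\<r>\<^sup>-\<^sup>1[f] \<equiv> inv2 C (brunit C f)"

lemma id1_simps [simp]:
  assumes "X \<in> bob C"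
  shows "bid1 C X \<in> bhom C" "bsrc C (bid1 C X) = X" "btrg C (bid1 C X) = X"
  using bicategory assms unfolding bicategory_def by auto

lemma src_trg_in_ob [simp]:
  assumes "f \<in> bhom C"
  shows "bsrc C f \<in> bob C" "btrg C f \<in> bob C"
  using bicategory assms unfolding bicategory_def by auto

lemma comp1_simps [simp]:
  assumes "f \<in> bhom C" "g \<in> bhom C" "bsrc C g = btrg C f"
  shows "g \<odot> f \<in> bhom C" "bsrc C (g \<odot> f) = bsrc C f" "btrg C (g \<odot> f) = btrg C g"
  using bicategory assms unfolding bicategory_def composable_def by auto

lemma dom_cod_in_hom [simp]:
  assumes "\<alpha> \<in> bcell C"
  shows "bdom C \<alpha> \<in> bhom C" "bcod C \<alpha> \<in> bhom C"
  using bicategory assms unfolding bicategory_def by auto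

lemma src_trg_cod:
  assumes "\<alpha> \<in> bcell C"
  shows "bsrc C (bcod C \<alpha>) = bsrc C (bdom C \<alpha>)" "btrg C (bcod C \<alpha>) = btrg C (bdom C \<alpha>)"
  using bicategory assms unfolding bicategory_def by auto

lemma id2_simps [simp]:
  assumes "f \<in> bhom C"
  shows "\<one>[f] \<in> bcell C" "bdom C \<one>[f] = f" "bcod C \<one>[f] = f"
  using bicategory assms unfolding bicategory_def cell_in_def by auto

lemma vcomp_simps [simp]:
  assumes "\<alpha> \<in> bcell C" "\<beta> \<in> bcell C" "bcod C \<alpha> = bdom C \<beta>"
  shows "\<beta> \<cdot> \<alpha> \<in> bcell C" "bdom C (\<beta> \<cdot> \<alpha>) = bdom C \<alpha>" "bcod C (\<beta> \<cdot> \<alpha>) = bcod C \<beta>"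
  using bicategory assms unfolding bicategory_def cell_in_def by auto

lemma hcomp_simps [simp]:
  assumes "\<alpha> \<in> bcell C" "\<beta> \<in> bcell C" "bsrc C (bdom C \<beta>) = btrg C (bdom C \<alpha>)"
  shows "\<beta> \<star> \<alpha> \<in> bcell C" "bdom C (\<beta> \<star> \<alpha>) = bdom C \<beta> \<odot> bdom C \<alpha>"
    "bcod C (\<beta> \<star> \<alpha>) = bcod C \<beta> \<odot> bcod C \<alpha>"
  using bicategory assms unfolding bicategory_def cell_in_def by auto

lemma hcomp_simps_cod [simp]:
  assumes "\<alpha> \<in> bcell C" "\<beta> \<in> bcell C" "bsrc C (bcod C \<beta>) = btrg C (bcod C \<alpha>)"
  shows "\<beta> \<star> \<alpha> \<in> bcell C" "bdom C (\<beta> \<star> \<alpha>) = bdom C \<beta> \<odot> bdom C \<alpha>"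
    "bcod C (\<beta> \<star> \<alpha>) = bcod C \<beta> \<odot> bcod C \<alpha>"
  using hcomp_simps assms src_trg_cod by metis+

lemma comp_id_left [simp]: "\<alpha> \<in> bcell C \<Longrightarrow> bcod C \<alpha> = g \<Longrightarrow> \<one>[g] \<cdot> \<alpha> = \<alpha>"
  using bicategory unfolding bicategory_def by auto

lemma comp_id_right [simp]: "\<alpha> \<in> bcell C \<Longrightarrow> bdom C \<alpha> = f \<Longrightarrow> \<alpha> \<cdot> \<one>[f] = \<alpha>"
  using bicategory unfolding bicategory_def by auto

lemma comp_assoc [simp]:
  assumes "\<alpha> \<in> bcell C" "\<beta> \<in> bcell C" "\<gamma> \<in> bcell C" "bcod C \<alpha> = bdom C \<beta>" "bcod C \<beta> = bdom C \<gamma>"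
  shows "(\<gamma> \<cdot> \<beta>) \<cdot> \<alpha> = \<gamma> \<cdot> \<beta> \<cdot> \<alpha>"
  using bicategory assms unfolding bicategory_def by auto

lemma hcomp_id2 [simp]:
  "f \<in> bhom C \<Longrightarrow> g \<in> bhom C \<Longrightarrow> bsrc C g = btrg C f \<Longrightarrow> \<one>[g] \<star> \<one>[f] = \<one>[g \<odot> f]"
  using bicategory unfolding bicategory_def composable_def by auto

lemma interchange:
  assumes "\<alpha> \<in> bcell C" "\<alpha>' \<in> bcell C" "\<beta> \<in> bcell C" "\<beta>' \<in> bcell C"
    "bcod C \<alpha> = bdom C \<alpha>'" "bcod C \<beta> = bdom C \<beta>'" "bsrc C (bdom C \<beta>) = btrg C (bdom C \<alpha>)"
  shows "(\<beta>' \<cdot> \<beta>) \<star> (\<alpha>' \<cdot> \<alpha>) = (\<beta>' \<star> \<alpha>') \<cdot> (\<beta> \<star> \<alpha>)"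
  using bicategory assms unfolding bicategory_def by auto

lemma assoc_simps [simp]:
  assumes "f \<in> bhom C" "g \<in> bhom C" "h \<in> bhom C" "bsrc C h = btrg C g" "bsrc C g = btrg C f"
  shows "\<a>[h, g, f] \<in> bcell C" "bdom C \<a>[h, g, f] = (h \<odot> g) \<odot> f" "bcod C \<a>[h, g, f] = h \<odot> g \<odot> f"
    "iso2 C \<a>[h, g, f]"
  using bicategory assms unfolding bicategory_def cell_in_def composable_def by auto

lemma unit_simps [simp]:
  assumes "f \<in> bhom C"
  shows "\<l>[f] \<in> bcell C" "bdom C \<l>[f] = bid1 C (btrg C f) \<odot> f" "bcod C \<l>[f] = f" "iso2 C \<l>[f]"
    "\<r>[f] \<in> bcell C" "bdom C \<r>[f] = f \<odot> bid1 C (bsrc C f)" "bcod C \<r>[f] = f" "iso2 C \<r>[f]"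
  using bicategory assms unfolding bicategory_def cell_in_def by auto

lemma assoc_naturality:
  assumes "\<alpha> \<in> bcell C" "\<beta> \<in> bcell C" "\<gamma> \<in> bcell C"
    "bsrc C (bdom C \<gamma>) = btrg C (bdom C \<beta>)" "bsrc C (bdom C \<beta>) = btrg C (bdom C \<alpha>)"
  shows "\<a>[bcod C \<gamma>, bcod C \<beta>, bcod C \<alpha>] \<cdot> ((\<gamma> \<star> \<beta>) \<star> \<alpha>) =
         (\<gamma> \<star> \<beta> \<star> \<alpha>) \<cdot> \<a>[bdom C \<gamma>, bdom C \<beta>, bdom C \<alpha>]"
  using bicategory assms unfolding bicategory_def by auto

lemma runit_naturality:
  assumes "\<alpha> \<in> bcell C"
  shows "\<r>[bcod C \<alpha>] \<cdot> (\<alpha> \<star> \<one>[bid1 C (bsrc C (bdom C \<alpha>))]) = \<alpha> \<cdot> \<r>[bdom C \<alpha>]"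
  using bicategory assms unfolding bicategory_def by auto

lemma pentagon:
  assumes "f \<in> bhom C" "g \<in> bhom C" "h \<in> bhom C" "k \<in> bhom C"
    "bsrc C k = btrg C h" "bsrc C h = btrg C g" "bsrc C g = btrg C f"
  shows "(\<one>[k] \<star> \<a>[h, g, f]) \<cdot> \<a>[k, h \<odot> g, f] \<cdot> (\<a>[k, h, g] \<star> \<one>[f]) =
         \<a>[k, h, g \<odot> f] \<cdot> \<a>[k \<odot> h, g, f]"
  using bicategory assms unfolding bicategory_def composable_def by auto

lemma triangle:
  assumes "f \<in> bhom C" "g \<in> bhom C" "bsrc C g = btrg C f"
  shows "(\<one>[g] \<star> \<l>[f]) \<cdot> \<a>[g, bid1 C (bsrc C g), f] = \<r>[g] \<star> \<one>[f]"
  using bicategory assms unfolding bicategory_def composable_def by auto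

lemma inverse2_unique:
  assumes "is_inverse2 C \<alpha> \<beta>" "is_inverse2 C \<alpha> \<beta>'"
  shows "\<beta> = \<beta>'"
proof -
  have "\<beta> = \<beta> \<cdot> \<alpha> \<cdot> \<beta>'"
    using assms unfolding is_inverse2_def by simp
  also have "\<dots> = \<beta>'"
    using assms comp_assoc[of \<beta>' \<alpha> \<beta>] unfolding is_inverse2_def by simp
  finally show ?thesis .
qed

lemma inv2_simps [simp]:
  assumes "iso2 C \<alpha>"
  shows "inv2 C \<alpha> \<in> bcell C" "bdom C (inv2 C \<alpha>) = bcod C \<alpha>" "bcod C (inv2 C \<alpha>) = bdom C \<alpha>"
    "inv2 C \<alpha> \<cdot> \<alpha> = \<one>[bdom C \<alpha>]" "\<alpha> \<cdot> inv2 C \<alpha> = \<one>[bcod C \<alpha>]"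
proof -
  have "is_inverse2 C \<alpha> (inv2 C \<alpha>)"
    using assms unfolding iso2_def inv2_def by (metis inverse2_unique theI)
  then show "inv2 C \<alpha> \<in> bcell C" "bdom C (inv2 C \<alpha>) = bcod C \<alpha>" "bcod C (inv2 C \<alpha>) = bdom C \<alpha>"
    "inv2 C \<alpha> \<cdot> \<alpha> = \<one>[bdom C \<alpha>]" "\<alpha> \<cdot> inv2 C \<alpha> = \<one>[bcod C \<alpha>]"
    unfolding is_inverse2_def by auto
qed

lemma iso2_in_cell: "iso2 C \<alpha> \<Longrightarrow> \<alpha> \<in> bcell C"
  unfolding iso2_def is_inverse2_def by blast

lemma inv2_comp_cancel [simp]:
  assumes "iso2 C \<alpha>" "\<gamma> \<in> bcell C" "bcod C \<gamma> = bdom C \<alpha>"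
  shows "inv2 C \<alpha> \<cdot> \<alpha> \<cdot> \<gamma> = \<gamma>"
  using assms comp_assoc[of \<gamma> \<alpha> "inv2 C \<alpha>"] iso2_in_cell by simp

lemma comp_inv2_cancel [simp]:
  assumes "iso2 C \<alpha>" "\<gamma> \<in> bcell C" "bcod C \<gamma> = bcod C \<alpha>"
  shows "\<alpha> \<cdot> inv2 C \<alpha> \<cdot> \<gamma> = \<gamma>"
  using assms comp_assoc[of \<gamma> "inv2 C \<alpha>" \<alpha>] iso2_in_cell by simp

lemma iso2_cancel_left:
  assumes "iso2 C \<alpha>" "\<beta> \<in> bcell C" "\<gamma> \<in> bcell C" "bcod C \<beta> = bdom C \<alpha>" "bcod C \<gamma> = bdom C \<alpha>"
    and "\<alpha> \<cdot> \<beta> = \<alpha> \<cdot> \<gamma>"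
  shows "\<beta> = \<gamma>"
  using assms inv2_comp_cancel by metis

lemma iso2_cancel_right:
  assumes "iso2 C \<alpha>" "\<beta> \<in> bcell C" "\<gamma> \<in> bcell C" "bdom C \<beta> = bcod C \<alpha>" "bdom C \<gamma> = bcod C \<alpha>"
    and "\<beta> \<cdot> \<alpha> = \<gamma> \<cdot> \<alpha>"
  shows "\<beta> = \<gamma>"
proof -
  have "\<beta> = (\<beta> \<cdot> \<alpha>) \<cdot> inv2 C \<alpha>"
    using assms(1,2,4) comp_assoc[of "inv2 C \<alpha>" \<alpha> \<beta>] iso2_in_cell by simp
  also have "\<dots> = \<gamma>"
    using assms comp_assoc[of "inv2 C \<alpha>" \<alpha> \<gamma>] iso2_in_cell by simp
  finally show ?thesis .
qed

lemma comp_permute: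
  assumes "\<beta> \<cdot> \<alpha> = \<beta>' \<cdot> \<alpha>'" "\<alpha> \<in> bcell C" "\<beta> \<in> bcell C" "\<alpha>' \<in> bcell C" "\<beta>' \<in> bcell C"
    "\<gamma> \<in> bcell C" "bcod C \<alpha> = bdom C \<beta>" "bcod C \<alpha>' = bdom C \<beta>'"
    "bcod C \<gamma> = bdom C \<alpha>" "bcod C \<gamma> = bdom C \<alpha>'"
  shows "\<beta> \<cdot> \<alpha> \<cdot> \<gamma> = \<beta>' \<cdot> \<alpha>' \<cdot> \<gamma>"
  using assms comp_assoc by metis

lemma comp_reduce:
  assumes "\<beta> \<cdot> \<alpha> = \<delta>" "\<alpha> \<in> bcell C" "\<beta> \<in> bcell C" "\<gamma> \<in> bcell C"
    "bcod C \<alpha> = bdom C \<beta>" "bcod C \<gamma> = bdom C \<alpha>"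
  shows "\<beta> \<cdot> \<alpha> \<cdot> \<gamma> = \<delta> \<cdot> \<gamma>"
  using assms comp_assoc by metis

lemma whisker_left_vcomp:
  assumes "u \<in> bhom C" "\<beta> \<in> bcell C" "\<alpha> \<in> bcell C" "bcod C \<alpha> = bdom C \<beta>" "bsrc C u = btrg C (bdom C \<alpha>)"
  shows "\<one>[u] \<star> (\<beta> \<cdot> \<alpha>) = (\<one>[u] \<star> \<beta>) \<cdot> (\<one>[u] \<star> \<alpha>)"
  using interchange[of \<alpha> \<beta> "\<one>[u]" "\<one>[u]"] assms by simp

lemma whisker_right_vcomp:
  assumes "f \<in> bhom C" "\<beta> \<in> bcell C" "\<alpha> \<in> bcell C" "bcod C \<alpha> = bdom C \<beta>" "bsrc C (bdom C \<alpha>) = btrg C f"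
  shows "(\<beta> \<cdot> \<alpha>) \<star> \<one>[f] = (\<beta> \<star> \<one>[f]) \<cdot> (\<alpha> \<star> \<one>[f])"
  using interchange[of "\<one>[f]" "\<one>[f]" \<alpha> \<beta>] assms by simp

lemma inv2_commute:
  assumes "iso2 C \<alpha>" "iso2 C \<beta>" "\<phi> \<in> bcell C" "\<psi> \<in> bcell C"
    "bcod C \<phi> = bdom C \<alpha>" "bdom C \<phi> = bdom C \<beta>" "bdom C \<psi> = bcod C \<beta>"
    and "\<alpha> \<cdot> \<phi> = \<psi> \<cdot> \<beta>"
  shows "\<phi> \<cdot> inv2 C \<beta> = inv2 C \<alpha> \<cdot> \<psi>"
proof -
  note cells = assms(3,4) iso2_in_cell[OF assms(1)] iso2_in_cell[OF assms(2)]
  have "(\<alpha> \<cdot> \<phi>) \<cdot> inv2 C \<beta> = (\<psi> \<cdot> \<beta>) \<cdot> inv2 C \<beta>"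
    by (simp only: assms(8))
  then have "\<alpha> \<cdot> \<phi> \<cdot> inv2 C \<beta> = \<psi>"
    using assms(1-7) cells by simp
  then have "inv2 C \<alpha> \<cdot> \<alpha> \<cdot> \<phi> \<cdot> inv2 C \<beta> = inv2 C \<alpha> \<cdot> \<psi>"
    by simp
  then show ?thesis
    using assms(1-7) cells by simp
qed

lemma assoc_inv_naturality:
  assumes "\<alpha> \<in> bcell C" "\<beta> \<in> bcell C" "\<gamma> \<in> bcell C"
    "bsrc C (bdom C \<gamma>) = btrg C (bdom C \<beta>)" "bsrc C (bdom C \<beta>) = btrg C (bdom C \<alpha>)"
  shows "((\<gamma> \<star> \<beta>) \<star> \<alpha>) \<cdot> \<a>\<^sup>-\<^sup>1[bdom C \<gamma>, bdom C \<beta>, bdom C \<alpha>] =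
         \<a>\<^sup>-\<^sup>1[bcod C \<gamma>, bcod C \<beta>, bcod C \<alpha>] \<cdot> (\<gamma> \<star> \<beta> \<star> \<alpha>)"
  using assms by (intro inv2_commute assoc_naturality) (simp_all add: src_trg_cod)

lemma whisker_right_id1_cancel:
  assumes "\<phi> \<in> bcell C" "\<psi> \<in> bcell C" "bdom C \<phi> = bdom C \<psi>" "bcod C \<phi> = bcod C \<psi>"
    and "\<phi> \<star> \<one>[bid1 C (bsrc C (bdom C \<phi>))] = \<psi> \<star> \<one>[bid1 C (bsrc C (bdom C \<phi>))]"
  shows "\<phi> = \<psi>"
proof (rule iso2_cancel_right)
  show "\<phi> \<cdot> \<r>[bdom C \<phi>] = \<psi> \<cdot> \<r>[bdom C \<phi>]"
    using runit_naturality[OF assms(1)] runit_naturality[OF assms(2)] assms(3-5) by simp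
qed (use assms in simp_all)

text \<open>Kelly's lemma. After whiskering with the unit \<open>e\<close>, both sides agree by the pentagon
  for \<open>u, f, e, e\<close> and the triangles for \<open>u \<odot> f\<close> and \<open>f\<close>.\<close>

lemma runit_comp1:
  assumes u: "u \<in> bhom C" and f: "f \<in> bhom C" and uf: "bsrc C u = btrg C f"
  shows "\<r>[u \<odot> f] = (\<one>[u] \<star> \<r>[f]) \<cdot> \<a>[u, f, bid1 C (bsrc C f)]"
proof -
  define e where "e = bid1 C (bsrc C f)"
  have e: "e \<in> bhom C" "bsrc C e = bsrc C f" "btrg C e = bsrc C f" "bid1 C (bsrc C f) = e"
    using f by (simp_all add: e_def)
  note simps = u f uf e
  have "\<a>[u, f, e] \<cdot> (\<r>[u \<odot> f] \<star> \<one>[e]) = \<a>[u, f, e] \<cdot> (\<one>[u \<odot> f] \<star> \<l>[e]) \<cdot> \<a>[u \<odot> f, e, e]"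
    using triangle[of e "u \<odot> f"] simps by simp
  also have "\<dots> = (\<one>[u] \<star> \<one>[f] \<star> \<l>[e]) \<cdot> \<a>[u, f, e \<odot> e] \<cdot> \<a>[u \<odot> f, e, e]"
  proof (rule comp_permute)
    show "\<a>[u, f, e] \<cdot> (\<one>[u \<odot> f] \<star> \<l>[e]) = (\<one>[u] \<star> \<one>[f] \<star> \<l>[e]) \<cdot> \<a>[u, f, e \<odot> e]"
      using assoc_naturality[of "\<l>[e]" "\<one>[f]" "\<one>[u]"] simps by simp
  qed (use simps in simp_all)
  also have "\<dots> = (\<one>[u] \<star> \<one>[f] \<star> \<l>[e]) \<cdot> (\<one>[u] \<star> \<a>[f, e, e]) \<cdot> \<a>[u, f \<odot> e, e] \<cdot> (\<a>[u, f, e] \<star> \<one>[e])"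
    using pentagon[of e e f u] simps by simp
  also have "\<dots> = (\<one>[u] \<star> \<r>[f] \<star> \<one>[e]) \<cdot> \<a>[u, f \<odot> e, e] \<cdot> (\<a>[u, f, e] \<star> \<one>[e])"
  proof (rule comp_reduce)
    have "(\<one>[u] \<star> \<one>[f] \<star> \<l>[e]) \<cdot> (\<one>[u] \<star> \<a>[f, e, e]) = \<one>[u] \<star> ((\<one>[f] \<star> \<l>[e]) \<cdot> \<a>[f, e, e])"
      using whisker_left_vcomp[of u "\<one>[f] \<star> \<l>[e]" "\<a>[f, e, e]"] simps by simp
    also have "\<dots> = \<one>[u] \<star> \<r>[f] \<star> \<one>[e]"
      using triangle[of e f] simps by simp
    finally show "(\<one>[u] \<star> \<one>[f] \<star> \<l>[e]) \<cdot> (\<one>[u] \<star> \<a>[f, e, e]) = \<one>[u] \<star> \<r>[f] \<star> \<one>[e]" .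
  qed (use simps in simp_all)
  also have "\<dots> = \<a>[u, f, e] \<cdot> ((\<one>[u] \<star> \<r>[f]) \<star> \<one>[e]) \<cdot> (\<a>[u, f, e] \<star> \<one>[e])"
  proof (rule comp_permute)
    show "(\<one>[u] \<star> \<r>[f] \<star> \<one>[e]) \<cdot> \<a>[u, f \<odot> e, e] = \<a>[u, f, e] \<cdot> ((\<one>[u] \<star> \<r>[f]) \<star> \<one>[e])"
      using assoc_naturality[of "\<one>[e]" "\<r>[f]" "\<one>[u]"] simps by simp
  qed (use simps in simp_all)
  also have "\<dots> = \<a>[u, f, e] \<cdot> (((\<one>[u] \<star> \<r>[f]) \<cdot> \<a>[u, f, e]) \<star> \<one>[e])"
    using whisker_right_vcomp[of e "\<one>[u] \<star> \<r>[f]" "\<a>[u, f, e]"] simps by simp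
  finally have whiskered: "\<r>[u \<odot> f] \<star> \<one>[e] = ((\<one>[u] \<star> \<r>[f]) \<cdot> \<a>[u, f, e]) \<star> \<one>[e]"
    by (rule iso2_cancel_left[rotated 5]) (use simps in simp_all)
  show ?thesis
    by (rule whisker_right_id1_cancel) (use simps whiskered in simp_all)
qed

abbreviation postcomp :: "'a \<Rightarrow> 'a \<Rightarrow> 'a \<Rightarrow> 'c \<Rightarrow> 'c" where
  "postcomp u f \<phi> \<theta> \<equiv> \<a>\<^sup>-\<^sup>1[u, f, \<phi>] \<cdot> (\<one>[u] \<star> \<theta>)"

lemma postcomp_runit_inv:
  assumes "u \<in> bhom C" "f \<in> bhom C" "bsrc C u = btrg C f"
  shows "postcomp u f (bid1 C (bsrc C f)) \<r>\<^sup>-\<^sup>1[f] = \<r>\<^sup>-\<^sup>1[u \<odot> f]"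
proof (rule iso2_cancel_left)
  have "\<r>[u \<odot> f] \<cdot> postcomp u f (bid1 C (bsrc C f)) \<r>\<^sup>-\<^sup>1[f] = (\<one>[u] \<star> \<r>[f]) \<cdot> (\<one>[u] \<star> \<r>\<^sup>-\<^sup>1[f])"
    using runit_comp1[OF assms] assms by simp
  also have "\<dots> = \<one>[u] \<star> (\<r>[f] \<cdot> \<r>\<^sup>-\<^sup>1[f])"
    using whisker_left_vcomp[of u "\<r>[f]" "\<r>\<^sup>-\<^sup>1[f]"] assms by simp
  also have "\<dots> = \<r>[u \<odot> f] \<cdot> \<r>\<^sup>-\<^sup>1[u \<odot> f]"
    using assms by simp
  finally show "\<r>[u \<odot> f] \<cdot> postcomp u f (bid1 C (bsrc C f)) \<r>\<^sup>-\<^sup>1[f] = \<r>[u \<odot> f] \<cdot> \<r>\<^sup>-\<^sup>1[u \<odot> f]" .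
qed (use assms in simp_all)

lemma pentagon_inv:
  assumes "f \<in> bhom C" "g \<in> bhom C" "h \<in> bhom C" "u \<in> bhom C"
    "bsrc C u = btrg C f" "bsrc C f = btrg C g" "bsrc C g = btrg C h"
  shows "\<a>\<^sup>-\<^sup>1[u, f, g \<odot> h] \<cdot> (\<one>[u] \<star> \<a>[f, g, h]) =
         \<a>[u \<odot> f, g, h] \<cdot> (\<a>\<^sup>-\<^sup>1[u, f, g] \<star> \<one>[h]) \<cdot> \<a>\<^sup>-\<^sup>1[u, f \<odot> g, h]"
proof (rule iso2_cancel_left)
  have whiskered_inverse: "(\<a>[u, f, g] \<star> \<one>[h]) \<cdot> (\<a>\<^sup>-\<^sup>1[u, f, g] \<star> \<one>[h]) = \<one>[(u \<odot> f \<odot> g) \<odot> h]"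
    using whisker_right_vcomp[of h "\<a>[u, f, g]" "\<a>\<^sup>-\<^sup>1[u, f, g]"] assms by simp
  have cancel: "(\<a>[u, f, g] \<star> \<one>[h]) \<cdot> (\<a>\<^sup>-\<^sup>1[u, f, g] \<star> \<one>[h]) \<cdot> \<a>\<^sup>-\<^sup>1[u, f \<odot> g, h] =
      \<a>\<^sup>-\<^sup>1[u, f \<odot> g, h]"
    using comp_reduce[OF whiskered_inverse, of "\<a>\<^sup>-\<^sup>1[u, f \<odot> g, h]"] assms by simp
  have "\<a>[u, f, g \<odot> h] \<cdot> \<a>\<^sup>-\<^sup>1[u, f, g \<odot> h] \<cdot> (\<one>[u] \<star> \<a>[f, g, h]) =
      (\<one>[u] \<star> \<a>[f, g, h]) \<cdot> \<a>[u, f \<odot> g, h] \<cdot> \<a>\<^sup>-\<^sup>1[u, f \<odot> g, h]"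
    using assms by simp
  also have "\<dots> = (\<one>[u] \<star> \<a>[f, g, h]) \<cdot> \<a>[u, f \<odot> g, h] \<cdot> (\<a>[u, f, g] \<star> \<one>[h]) \<cdot>
      (\<a>\<^sup>-\<^sup>1[u, f, g] \<star> \<one>[h]) \<cdot> \<a>\<^sup>-\<^sup>1[u, f \<odot> g, h]"
    by (simp only: cancel)
  also have "\<dots> = \<a>[u, f, g \<odot> h] \<cdot> \<a>[u \<odot> f, g, h] \<cdot> (\<a>\<^sup>-\<^sup>1[u, f, g] \<star> \<one>[h]) \<cdot> \<a>\<^sup>-\<^sup>1[u, f \<odot> g, h]"
    using pentagon[of h g f u] assms by (simp flip: comp_assoc)
  finally show "\<a>[u, f, g \<odot> h] \<cdot> \<a>\<^sup>-\<^sup>1[u, f, g \<odot> h] \<cdot> (\<one>[u] \<star> \<a>[f, g, h]) =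
      \<a>[u, f, g \<odot> h] \<cdot> \<a>[u \<odot> f, g, h] \<cdot> (\<a>\<^sup>-\<^sup>1[u, f, g] \<star> \<one>[h]) \<cdot> \<a>\<^sup>-\<^sup>1[u, f \<odot> g, h]" .
qed (use assms in simp_all)

lemma postcomp_naturality:
  assumes "u \<in> bhom C" "f \<in> bhom C" "\<gamma> \<in> bcell C" "\<theta> \<in> bcell C"
    "bsrc C u = btrg C f" "bsrc C f = btrg C (bdom C \<gamma>)" "bcod C \<theta> = f \<odot> bdom C \<gamma>"
  shows "postcomp u f (bcod C \<gamma>) ((\<one>[f] \<star> \<gamma>) \<cdot> \<theta>) = (\<one>[u \<odot> f] \<star> \<gamma>) \<cdot> postcomp u f (bdom C \<gamma>) \<theta>"
proof -
  have "btrg C (bdom C \<theta>) = btrg C f"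
    using src_trg_cod[of \<theta>] assms by simp
  then have "postcomp u f (bcod C \<gamma>) ((\<one>[f] \<star> \<gamma>) \<cdot> \<theta>) =
      \<a>\<^sup>-\<^sup>1[u, f, bcod C \<gamma>] \<cdot> (\<one>[u] \<star> \<one>[f] \<star> \<gamma>) \<cdot> (\<one>[u] \<star> \<theta>)"
    using whisker_left_vcomp[of u "\<one>[f] \<star> \<gamma>" \<theta>] assms by simp
  also have "\<dots> = ((\<one>[u] \<star> \<one>[f]) \<star> \<gamma>) \<cdot> postcomp u f (bdom C \<gamma>) \<theta>"
  proof (rule comp_permute)
    show "\<a>\<^sup>-\<^sup>1[u, f, bcod C \<gamma>] \<cdot> (\<one>[u] \<star> \<one>[f] \<star> \<gamma>) = ((\<one>[u] \<star> \<one>[f]) \<star> \<gamma>) \<cdot> \<a>\<^sup>-\<^sup>1[u, f, bdom C \<gamma>]"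
      using assoc_inv_naturality[of \<gamma> "\<one>[f]" "\<one>[u]"] assms by simp
  qed (use assms in \<open>simp_all add: src_trg_cod\<close>)
  finally show ?thesis
    using assms by simp
qed

lemma postcomp_pasting:
  assumes "u \<in> bhom C" "f\<^sub>2 \<in> bhom C" "\<phi>\<^sub>1 \<in> bhom C" "\<phi>\<^sub>0 \<in> bhom C" "\<theta>\<^sub>1 \<in> bcell C" "\<theta>\<^sub>0 \<in> bcell C"
    "bsrc C u = btrg C f\<^sub>2" "bsrc C f\<^sub>2 = btrg C \<phi>\<^sub>1" "bsrc C \<phi>\<^sub>1 = btrg C \<phi>\<^sub>0"
    "bcod C \<theta>\<^sub>1 = f\<^sub>2 \<odot> \<phi>\<^sub>1" "bcod C \<theta>\<^sub>0 = bdom C \<theta>\<^sub>1 \<odot> \<phi>\<^sub>0"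
  shows "postcomp u f\<^sub>2 (\<phi>\<^sub>1 \<odot> \<phi>\<^sub>0) (\<a>[f\<^sub>2, \<phi>\<^sub>1, \<phi>\<^sub>0] \<cdot> (\<theta>\<^sub>1 \<star> \<one>[\<phi>\<^sub>0]) \<cdot> \<theta>\<^sub>0) =
    \<a>[u \<odot> f\<^sub>2, \<phi>\<^sub>1, \<phi>\<^sub>0] \<cdot> (postcomp u f\<^sub>2 \<phi>\<^sub>1 \<theta>\<^sub>1 \<star> \<one>[\<phi>\<^sub>0]) \<cdot> postcomp u (bdom C \<theta>\<^sub>1) \<phi>\<^sub>0 \<theta>\<^sub>0"
proof -
  define f\<^sub>1 where "f\<^sub>1 = bdom C \<theta>\<^sub>1"
  have f\<^sub>1: "f\<^sub>1 \<in> bhom C" "bsrc C f\<^sub>1 = btrg C \<phi>\<^sub>0" "btrg C f\<^sub>1 = btrg C f\<^sub>2"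
    "btrg C (bdom C \<theta>\<^sub>0) = btrg C f\<^sub>2"
    using assms src_trg_cod[of \<theta>\<^sub>1] src_trg_cod[of \<theta>\<^sub>0] unfolding f\<^sub>1_def by simp_all
  note simps = assms f\<^sub>1 f\<^sub>1_def[symmetric]
  have "postcomp u f\<^sub>2 (\<phi>\<^sub>1 \<odot> \<phi>\<^sub>0) (\<a>[f\<^sub>2, \<phi>\<^sub>1, \<phi>\<^sub>0] \<cdot> (\<theta>\<^sub>1 \<star> \<one>[\<phi>\<^sub>0]) \<cdot> \<theta>\<^sub>0) =
      \<a>\<^sup>-\<^sup>1[u, f\<^sub>2, \<phi>\<^sub>1 \<odot> \<phi>\<^sub>0] \<cdot> (\<one>[u] \<star> \<a>[f\<^sub>2, \<phi>\<^sub>1, \<phi>\<^sub>0]) \<cdot> (\<one>[u] \<star> \<theta>\<^sub>1 \<star> \<one>[\<phi>\<^sub>0]) \<cdot> (\<one>[u] \<star> \<theta>\<^sub>0)"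
    using simps by (simp add: whisker_left_vcomp)
  also have "\<dots> = \<a>[u \<odot> f\<^sub>2, \<phi>\<^sub>1, \<phi>\<^sub>0] \<cdot> (\<a>\<^sup>-\<^sup>1[u, f\<^sub>2, \<phi>\<^sub>1] \<star> \<one>[\<phi>\<^sub>0]) \<cdot> \<a>\<^sup>-\<^sup>1[u, f\<^sub>2 \<odot> \<phi>\<^sub>1, \<phi>\<^sub>0] \<cdot>
      (\<one>[u] \<star> \<theta>\<^sub>1 \<star> \<one>[\<phi>\<^sub>0]) \<cdot> (\<one>[u] \<star> \<theta>\<^sub>0)"
    using pentagon_inv[of f\<^sub>2 \<phi>\<^sub>1 \<phi>\<^sub>0 u] simps by (simp flip: comp_assoc)
  also have "\<a>\<^sup>-\<^sup>1[u, f\<^sub>2 \<odot> \<phi>\<^sub>1, \<phi>\<^sub>0] \<cdot> (\<one>[u] \<star> \<theta>\<^sub>1 \<star> \<one>[\<phi>\<^sub>0]) \<cdot> (\<one>[u] \<star> \<theta>\<^sub>0) =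
      ((\<one>[u] \<star> \<theta>\<^sub>1) \<star> \<one>[\<phi>\<^sub>0]) \<cdot> postcomp u f\<^sub>1 \<phi>\<^sub>0 \<theta>\<^sub>0"
  proof (rule comp_permute)
    show "\<a>\<^sup>-\<^sup>1[u, f\<^sub>2 \<odot> \<phi>\<^sub>1, \<phi>\<^sub>0] \<cdot> (\<one>[u] \<star> \<theta>\<^sub>1 \<star> \<one>[\<phi>\<^sub>0]) = ((\<one>[u] \<star> \<theta>\<^sub>1) \<star> \<one>[\<phi>\<^sub>0]) \<cdot> \<a>\<^sup>-\<^sup>1[u, f\<^sub>1, \<phi>\<^sub>0]"
      using assoc_inv_naturality[of "\<one>[\<phi>\<^sub>0]" \<theta>\<^sub>1 "\<one>[u]"] simps by simp
  qed (use simps in simp_all)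
  also have "(\<a>\<^sup>-\<^sup>1[u, f\<^sub>2, \<phi>\<^sub>1] \<star> \<one>[\<phi>\<^sub>0]) \<cdot> ((\<one>[u] \<star> \<theta>\<^sub>1) \<star> \<one>[\<phi>\<^sub>0]) \<cdot> postcomp u f\<^sub>1 \<phi>\<^sub>0 \<theta>\<^sub>0 =
      (postcomp u f\<^sub>2 \<phi>\<^sub>1 \<theta>\<^sub>1 \<star> \<one>[\<phi>\<^sub>0]) \<cdot> postcomp u f\<^sub>1 \<phi>\<^sub>0 \<theta>\<^sub>0"
    using whisker_right_vcomp[of \<phi>\<^sub>0 "\<a>\<^sup>-\<^sup>1[u, f\<^sub>2, \<phi>\<^sub>1]" "\<one>[u] \<star> \<theta>\<^sub>1"] simps by (simp flip: comp_assoc)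
  finally show ?thesis
    unfolding f\<^sub>1_def .
qed

end

section \<open>Lax slices\<close>

locale lax_slice_postcomp = bicat C
  for C :: "('o2, 'a2, 'c2) bicat" +
  fixes B :: "('o, 'a, 'c) bicat" and F :: "('o, 'a, 'c, 'o2, 'a2, 'c2) laxf"
    and u :: 'a2 and X Y :: 'o2
  assumes B: "bicategory B" and lax_functor: "lax_functor B C F"
    and u: "u \<in> bhom C" "bsrc C u = X" "btrg C u = Y"
begin

lemma bicat_B: "bicat B"
  using B by (rule bicat.intro)

lemmas B_simps [simp] =
  bicat.id1_simps[OF bicat_B] bicat.comp1_simps[OF bicat_B] bicat.id2_simps[OF bicat_B]
  bicat.hcomp_simps[OF bicat_B] bicat.comp_id_left[OF bicat_B] bicat.comp_id_right[OF bicat_B]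
  bicat.hcomp_id2[OF bicat_B] bicat.assoc_simps[OF bicat_B] bicat.unit_simps[OF bicat_B]

lemma fobj_in_ob [simp]: "A \<in> bob B \<Longrightarrow> fobj F A \<in> bob C"
  using lax_functor unfolding lax_functor_def by blast

lemma fmor_simps [simp]:
  assumes "p \<in> bhom B"
  shows "fmor F p \<in> bhom C" "bsrc C (fmor F p) = fobj F (bsrc B p)" "btrg C (fmor F p) = fobj F (btrg B p)"
  using lax_functor assms unfolding lax_functor_def by blast+

lemma fcell_simps [simp]:
  assumes "\<alpha> \<in> bcell B"
  shows "fcell F \<alpha> \<in> bcell C" "bdom C (fcell F \<alpha>) = fmor F (bdom B \<alpha>)" "bcod C (fcell F \<alpha>) = fmor F (bcod B \<alpha>)"
  using lax_functor assms unfolding lax_functor_def cell_in_def by blast+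

lemma fcell_id2 [simp]: "p \<in> bhom B \<Longrightarrow> fcell F (bid2 B p) = \<one>[fmor F p]"
  using lax_functor unfolding lax_functor_def by blast

lemma funit_simps [simp]:
  assumes "A \<in> bob B"
  shows "funit F A \<in> bcell C" "bdom C (funit F A) = bid1 C (fobj F A)" "bcod C (funit F A) = fmor F (bid1 B A)"
  using lax_functor assms unfolding lax_functor_def cell_in_def by blast+

lemma fcomp_simps [simp]:
  assumes "p \<in> bhom B" "q \<in> bhom B" "bsrc B q = btrg B p"
  shows "fcomp F q p \<in> bcell C" "bdom C (fcomp F q p) = fmor F q \<odot> fmor F p"
    "bcod C (fcomp F q p) = fmor F (bcomp1 B q p)"
  using lax_functor assms unfolding lax_functor_def cell_in_def composable_def by blast+

lemma sl_homsE:
  assumes "P \<in> sl_homs B C F Z"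
  obtains A\<^sub>0 f\<^sub>0 A\<^sub>1 f\<^sub>1 p \<theta> where "P = ((A\<^sub>0, f\<^sub>0), (A\<^sub>1, f\<^sub>1), p, \<theta>)"
    "A\<^sub>0 \<in> bob B" "f\<^sub>0 \<in> bhom C" "bsrc C f\<^sub>0 = fobj F A\<^sub>0" "btrg C f\<^sub>0 = Z"
    "A\<^sub>1 \<in> bob B" "f\<^sub>1 \<in> bhom C" "bsrc C f\<^sub>1 = fobj F A\<^sub>1" "btrg C f\<^sub>1 = Z"
    "p \<in> bhom B" "bsrc B p = A\<^sub>0" "btrg B p = A\<^sub>1"
    "\<theta> \<in> bcell C" "bdom C \<theta> = f\<^sub>0" "bcod C \<theta> = f\<^sub>1 \<odot> fmor F p"
  using assms unfolding sl_homs_def sl_obs_def cell_in_def by blast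

lemma sl_homsI:
  assumes "A\<^sub>0 \<in> bob B" "f\<^sub>0 \<in> bhom C" "bsrc C f\<^sub>0 = fobj F A\<^sub>0" "btrg C f\<^sub>0 = Z"
    "A\<^sub>1 \<in> bob B" "f\<^sub>1 \<in> bhom C" "bsrc C f\<^sub>1 = fobj F A\<^sub>1" "btrg C f\<^sub>1 = Z"
    "p \<in> bhom B" "bsrc B p = A\<^sub>0" "btrg B p = A\<^sub>1"
    "\<theta> \<in> bcell C" "bdom C \<theta> = f\<^sub>0" "bcod C \<theta> = f\<^sub>1 \<odot> fmor F p"
  shows "((A\<^sub>0, f\<^sub>0), (A\<^sub>1, f\<^sub>1), p, \<theta>) \<in> sl_homs B C F Z"
  using assms unfolding sl_homs_def sl_obs_def cell_in_def by auto

lemma sl_cellsE: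
  assumes "\<Gamma> \<in> sl_cells B C F Z"
  obtains A\<^sub>0 f\<^sub>0 A\<^sub>1 f\<^sub>1 p\<^sub>0 \<theta>\<^sub>0 p\<^sub>1 \<theta>\<^sub>1 \<alpha> where
    "\<Gamma> = (((A\<^sub>0, f\<^sub>0), (A\<^sub>1, f\<^sub>1), p\<^sub>0, \<theta>\<^sub>0), ((A\<^sub>0, f\<^sub>0), (A\<^sub>1, f\<^sub>1), p\<^sub>1, \<theta>\<^sub>1), \<alpha>)"
    "((A\<^sub>0, f\<^sub>0), (A\<^sub>1, f\<^sub>1), p\<^sub>0, \<theta>\<^sub>0) \<in> sl_homs B C F Z"
    "((A\<^sub>0, f\<^sub>0), (A\<^sub>1, f\<^sub>1), p\<^sub>1, \<theta>\<^sub>1) \<in> sl_homs B C F Z"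
    "\<alpha> \<in> bcell B" "bdom B \<alpha> = p\<^sub>0" "bcod B \<alpha> = p\<^sub>1" "(\<one>[f\<^sub>1] \<star> fcell F \<alpha>) \<cdot> \<theta>\<^sub>0 = \<theta>\<^sub>1"
  using assms unfolding sl_cells_def cell_in_def sl_src_def sl_trg_def sl_p_def sl_theta_def
  by (auto simp: split_paired_all)

lemma sl_homs_components:
  assumes "P \<in> sl_homs B C F Z"
  shows "sl_p P \<in> bhom B" "bsrc B (sl_p P) = fst (sl_src P)" "btrg B (sl_p P) = fst (sl_trg P)"
    "sl_src P \<in> sl_obs B C F Z" "sl_trg P \<in> sl_obs B C F Z"
    "fst (sl_src P) \<in> bob B" "fst (sl_trg P) \<in> bob B"
  using assms unfolding sl_homs_def sl_obs_def sl_p_def sl_src_def sl_trg_def by auto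

lemma sl_cells_components:
  assumes "\<Gamma> \<in> sl_cells B C F Z"
  shows "fst \<Gamma> \<in> sl_homs B C F Z" "fst (snd \<Gamma>) \<in> sl_homs B C F Z"
    "sl_src (fst (snd \<Gamma>)) = sl_src (fst \<Gamma>)" "sl_trg (fst (snd \<Gamma>)) = sl_trg (fst \<Gamma>)"
    "snd (snd \<Gamma>) \<in> bcell B" "bdom B (snd (snd \<Gamma>)) = sl_p (fst \<Gamma>)"
    "bcod B (snd (snd \<Gamma>)) = sl_p (fst (snd \<Gamma>))"
  using assms unfolding sl_cells_def cell_in_def by auto

lemma sl_map_mor_simps [simp]:
  "sl_src (sl_map_mor C F u P) = sl_map_obj C u (sl_src P)"
  "sl_trg (sl_map_mor C F u P) = sl_map_obj C u (sl_trg P)"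
  "sl_p (sl_map_mor C F u P) = sl_p P"
  by (simp_all add: sl_map_mor_def sl_src_def sl_trg_def sl_p_def)

lemma sl_comp1_simps [simp]:
  "sl_src (sl_comp1 B C F Q P) = sl_src P" "sl_trg (sl_comp1 B C F Q P) = sl_trg Q"
  "sl_p (sl_comp1 B C F Q P) = bcomp1 B (sl_p Q) (sl_p P)"
  by (simp_all add: sl_comp1_def sl_src_def sl_trg_def sl_p_def)

lemma sl_id1_simps [simp]:
  "sl_src (sl_id1 C B F Af) = Af" "sl_trg (sl_id1 C B F Af) = Af" "sl_p (sl_id1 C B F Af) = bid1 B (fst Af)"
  by (simp_all add: sl_id1_def sl_src_def sl_trg_def sl_p_def split: prod.split)

lemma fst_sl_map_obj [simp]: "fst (sl_map_obj C u Af) = fst Af"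
  by (simp add: sl_map_obj_def split: prod.split)

lemma sl_map_obj_in_obs: "Af \<in> sl_obs B C F X \<Longrightarrow> sl_map_obj C u Af \<in> sl_obs B C F Y"
  using u unfolding sl_obs_def sl_map_obj_def by auto

lemma sl_map_mor_in_homs:
  assumes "P \<in> sl_homs B C F X"
  shows "sl_map_mor C F u P \<in> sl_homs B C F Y"
  using assms
proof (cases rule: sl_homsE)
  case (1 A\<^sub>0 f\<^sub>0 A\<^sub>1 f\<^sub>1 p \<theta>)
  then show ?thesis
    unfolding sl_map_mor_def sl_map_obj_def sl_src_def sl_trg_def sl_p_def sl_theta_def
    using u by (auto intro!: sl_homsI)
qed

lemma sl_comp1_in_homs:
  assumes "Q \<in> sl_homs B C F Z" "P \<in> sl_homs B C F Z" "sl_src Q = sl_trg P"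
  shows "sl_comp1 B C F Q P \<in> sl_homs B C F Z"
  using assms(1)
proof (cases rule: sl_homsE)
  case Q: (1 A\<^sub>1 f\<^sub>1 A\<^sub>2 f\<^sub>2 p\<^sub>1 \<theta>\<^sub>1)
  from assms(2) show ?thesis
  proof (cases rule: sl_homsE)
    case P: (1 A\<^sub>0 f\<^sub>0 A\<^sub>1' f\<^sub>1' p\<^sub>0 \<theta>\<^sub>0)
    then show ?thesis
      using Q assms(3) unfolding sl_comp1_def sl_src_def sl_trg_def sl_p_def sl_theta_def
      by (auto intro!: sl_homsI)
  qed
qed

lemma sl_id1_in_homs:
  assumes "Af \<in> sl_obs B C F Z"
  shows "sl_id1 C B F Af \<in> sl_homs B C F Z"
  using assms unfolding sl_id1_def sl_obs_def by (auto intro!: sl_homsI)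

lemma sl_id2_in_cells:
  assumes "P \<in> sl_homs B C F Z" "sl_p P = p"
  shows "(P, P, bid2 B p) \<in> sl_cells B C F Z"
  using assms
proof (cases rule: sl_homsE)
  case (1 A\<^sub>0 f\<^sub>0 A\<^sub>1 f\<^sub>1 q \<theta>)
  then show ?thesis
    using assms unfolding sl_cells_def cell_in_def sl_p_def sl_trg_def sl_src_def sl_theta_def
    by auto
qed

lemma sl_map_cell_in_cells:
  assumes "(P\<^sub>0, P\<^sub>1, \<alpha>) \<in> sl_cells B C F X"
  shows "(sl_map_mor C F u P\<^sub>0, sl_map_mor C F u P\<^sub>1, \<alpha>) \<in> sl_cells B C F Y"
  using assms
proof (cases rule: sl_cellsE)
  case (1 A\<^sub>0 f\<^sub>0 A\<^sub>1 f\<^sub>1 p\<^sub>0 \<theta>\<^sub>0 p\<^sub>1 \<theta>\<^sub>1 \<beta>)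
  from 1(2) have "f\<^sub>1 \<in> bhom C" "btrg C f\<^sub>1 = X" "bsrc C f\<^sub>1 = fobj F A\<^sub>1"
    "p\<^sub>0 \<in> bhom B" "btrg B p\<^sub>0 = A\<^sub>1" "\<theta>\<^sub>0 \<in> bcell C" "bcod C \<theta>\<^sub>0 = f\<^sub>1 \<odot> fmor F p\<^sub>0"
    unfolding sl_homs_def sl_obs_def cell_in_def by auto
  then have "(\<one>[u \<odot> f\<^sub>1] \<star> fcell F \<beta>) \<cdot> postcomp u f\<^sub>1 (fmor F p\<^sub>0) \<theta>\<^sub>0 = postcomp u f\<^sub>1 (fmor F p\<^sub>1) \<theta>\<^sub>1"
    using postcomp_naturality[of u f\<^sub>1 "fcell F \<beta>" \<theta>\<^sub>0] 1(4-7) u by simp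
  then show ?thesis
    using sl_map_mor_in_homs[OF 1(2)] sl_map_mor_in_homs[OF 1(3)] 1(1,4-6)
    unfolding sl_cells_def cell_in_def
    by (simp add: sl_map_mor_def sl_map_obj_def sl_src_def sl_trg_def sl_p_def sl_theta_def)
qed

lemma sl_map_mor_id1:
  assumes "Af \<in> sl_obs B C F X"
  shows "sl_map_mor C F u (sl_id1 C B F Af) = sl_id1 C B F (sl_map_obj C u Af)"
proof -
  obtain A f where Af: "Af = (A, f)" "A \<in> bob B" "f \<in> bhom C" "bsrc C f = fobj F A" "btrg C f = X"
    using assms unfolding sl_obs_def by auto
  have "postcomp u f (fmor F (bid1 B A)) ((\<one>[f] \<star> funit F A) \<cdot> \<r>\<^sup>-\<^sup>1[f]) =
      (\<one>[u \<odot> f] \<star> funit F A) \<cdot> postcomp u f (bid1 C (bsrc C f)) \<r>\<^sup>-\<^sup>1[f]"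
    using postcomp_naturality[of u f "funit F A" "\<r>\<^sup>-\<^sup>1[f]"] Af u by simp
  also have "\<dots> = (\<one>[u \<odot> f] \<star> funit F A) \<cdot> \<r>\<^sup>-\<^sup>1[u \<odot> f]"
    using postcomp_runit_inv[of u f] Af u by simp
  finally show ?thesis
    using Af by (simp add: sl_id1_def sl_map_mor_def sl_map_obj_def sl_src_def sl_trg_def sl_p_def sl_theta_def)
qed

lemma sl_map_mor_comp1:
  assumes "Q \<in> sl_homs B C F X" "P \<in> sl_homs B C F X" "sl_src Q = sl_trg P"
  shows "sl_map_mor C F u (sl_comp1 B C F Q P) = sl_comp1 B C F (sl_map_mor C F u Q) (sl_map_mor C F u P)"
  using assms(1)
proof (cases rule: sl_homsE)
  case Q: (1 A\<^sub>1 f\<^sub>1 A\<^sub>2 f\<^sub>2 p\<^sub>1 \<theta>\<^sub>1)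
  from assms(2) show ?thesis
  proof (cases rule: sl_homsE)
    case P: (1 A\<^sub>0 f\<^sub>0 A\<^sub>1' f\<^sub>1' p\<^sub>0 \<theta>\<^sub>0)
    have "A\<^sub>1' = A\<^sub>1" "f\<^sub>1' = f\<^sub>1"
      using assms(3) Q P by (auto simp: sl_src_def sl_trg_def)
    note simps = Q P this u
    let ?\<theta> = "\<a>[f\<^sub>2, fmor F p\<^sub>1, fmor F p\<^sub>0] \<cdot> (\<theta>\<^sub>1 \<star> \<one>[fmor F p\<^sub>0]) \<cdot> \<theta>\<^sub>0"
    have "postcomp u f\<^sub>2 (fmor F (bcomp1 B p\<^sub>1 p\<^sub>0)) ((\<one>[f\<^sub>2] \<star> fcomp F p\<^sub>1 p\<^sub>0) \<cdot> ?\<theta>) =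
        (\<one>[u \<odot> f\<^sub>2] \<star> fcomp F p\<^sub>1 p\<^sub>0) \<cdot> postcomp u f\<^sub>2 (fmor F p\<^sub>1 \<odot> fmor F p\<^sub>0) ?\<theta>"
      using postcomp_naturality[of u f\<^sub>2 "fcomp F p\<^sub>1 p\<^sub>0" ?\<theta>] simps by simp
    also have "postcomp u f\<^sub>2 (fmor F p\<^sub>1 \<odot> fmor F p\<^sub>0) ?\<theta> =
        \<a>[u \<odot> f\<^sub>2, fmor F p\<^sub>1, fmor F p\<^sub>0] \<cdot> (postcomp u f\<^sub>2 (fmor F p\<^sub>1) \<theta>\<^sub>1 \<star> \<one>[fmor F p\<^sub>0]) \<cdot>
          postcomp u f\<^sub>1 (fmor F p\<^sub>0) \<theta>\<^sub>0"
      using postcomp_pasting[of u f\<^sub>2 "fmor F p\<^sub>1" "fmor F p\<^sub>0" \<theta>\<^sub>1 \<theta>\<^sub>0] simps by simp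
    finally show ?thesis
      using simps by (simp add: sl_comp1_def sl_map_mor_def sl_map_obj_def sl_src_def sl_trg_def sl_p_def sl_theta_def)
  qed
qed

lemma strict_functor_slice_functor:
  "strict_functor (lax_slice B C F X) (lax_slice B C F Y) (slice_functor B C F Y u)"
  unfolding strict_functor_def lax_functor_def
  \<comment> \<open>Splitting the tuple-valued 1-cells would block the rules about \<open>sl_src\<close>, \<open>sl_p\<close>, etc.,
    and the component rules are instantiated at \<open>X\<close> because their slice index is not determined
    by the terms they rewrite.\<close>
  by (simp add: lax_slice_def slice_functor_def composable_def cell_in_def case_prod_beta
      sl_homs_components[where Z = X] sl_cells_components[where Z = X] sl_map_obj_in_obs sl_map_mor_in_homs
      sl_map_cell_in_cells sl_map_mor_id1 sl_map_mor_comp1 sl_id1_in_homs sl_comp1_in_homs sl_id2_in_cells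
      del: split_paired_All)

end

theorem proposition3p3:
  fixes B :: "('o, 'a, 'c) bicat"
    and C :: "('o2, 'a2, 'c2) bicat"
    and F :: "('o, 'a, 'c, 'o2, 'a2, 'c2) laxf"
    and u :: 'a2 and X Y :: 'o2
  assumes "bicategory B" and "bicategory C"
    and "lax_functor B C F"
    and "u \<in> bhom C" and "bsrc C u = X" and "btrg C u = Y"
  shows "strict_functor (lax_slice B C F X) (lax_slice B C F Y) (slice_functor B C F Y u)"
proof -
  interpret lax_slice_postcomp C B F u X Y
    using assms by unfold_locales
  show ?thesis
    by (rule strict_functor_slice_functor)
qed

end
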